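(* The ordinary differential equation $$z''+\Big(2\frac{w'}{w}+\frac1r\Big)z'-2w^2z=0,\qquad r\in(0,\infty),$$ admits two linearly independent real solutions $z_{1,0},z_{2,0}$ such that $z_{1,0}(r)=O(1)$ as $r\to0^+$ and $z_{1,0}(r)=O(r^{-1/2}e^{\sqrt2 r})$ as $r\to\infty$, while $z_{2,0}(r)=O(r^{-2})$ as $r\to0^+$ and $z_{2,0}(r)=O(r^{-1/2}e^{-\sqrt2 r})$ as $r\to\infty$.
   Context: Let $w:[0,\infty)\to\mathbb{R}$ be the unique solution of $w''+\frac1r w'-\frac1{r^2}w+(1-w^2)w=0$ on $(0,\infty)$ with $w(0)=0$ and $w(r)\to1$ as $r\to\infty$; it satisfies $0<w<1$ and $w'>0$ on $(0,\infty)$, $w(r)=\alpha r+O(r^3)$ as $r\to0^+$ for some $\alpha>0$, and $w(r)=1-\frac{1}{2r^2}+O(r^{-4})$, $w'(r)=r^{-3}+O(r^{-5})$ as $r\to\infty$. *)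

theory Defs
  imports "HOL-Analysis.Analysis" "HOL-Library.Landau_Symbols"
begin

definition is_profile :: "(real \<Rightarrow> real) \<Rightarrow> (real \<Rightarrow> real) \<Rightarrow> (real \<Rightarrow> real) \<Rightarrow> bool" where
  "is_profile w w' w'' \<longleftrightarrow>
     (\<forall>r>0. (w has_real_derivative w' r) (at r) \<and> (w' has_real_derivative w'' r) (at r) \<and>
        w'' r + w' r / r - w r / r\<^sup>2 + (1 - (w r)\<^sup>2) * w r = 0)
   \<and> w 0 = 0 \<and> (w \<longlongrightarrow> 1) at_top"

definition is_lin_sol :: "(real \<Rightarrow> real) \<Rightarrow> (real \<Rightarrow> real) \<Rightarrow> (real \<Rightarrow> real) \<Rightarrow> (real \<Rightarrow> real) \<Rightarrow> (real \<Rightarrow> real) \<Rightarrow> bool" where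
  "is_lin_sol w w' z z' z'' \<longleftrightarrow>
     (\<forall>r>0. (z has_real_derivative z' r) (at r) \<and> (z' has_real_derivative z'' r) (at r) \<and>
        z'' r + (2 * w' r / w r + 1 / r) * z' r - 2 * (w r)\<^sup>2 * z r = 0)"

definition lin_indep_pos :: "(real \<Rightarrow> real) \<Rightarrow> (real \<Rightarrow> real) \<Rightarrow> bool" where
  "lin_indep_pos f g \<longleftrightarrow>
     (\<forall>a b. (\<forall>r>0. a * f r + b * g r = 0) \<longrightarrow> a = 0 \<and> b = 0)"

end

theory Submission
  imports Defs "HOL-Real_Asymp.Real_Asymp"
begin

text \<open>The equation reads \<open>(p z')' = q z\<close> with \<open>p = r w\<^sup>2\<close> and \<open>q = 2 r w\<^sup>4 \<ge> 0\<close>. A solution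
  that is regular at \<open>0\<close> is the increasing limit \<open>z1\<close> of the Picard iterates of
  \<open>z = 1 + \<integral>\<^sub>0\<^sup>r p\<^sup>-\<^sup>1 \<integral>\<^sub>0\<^sup>s q z\<close> started at \<open>1\<close>; all iterates stay between \<open>1\<close> and
  \<open>exp (r\<^sup>2/2)\<close>. The substitution \<open>u = \<surd>r w z1\<close> removes the first-order term and gives
  \<open>u'' = V u\<close> with \<open>V = 3 w\<^sup>2 - 1 + 3/(4 r\<^sup>2)\<close>. The expansion of \<open>w\<close> at infinity yields
  \<open>2 - 4/r\<^sup>2 \<le> V \<le> 2\<close> for large \<open>r\<close>, so \<open>u\<close> grows exactly like \<open>exp (\<surd>2 r)\<close>, which is
  the bound for \<open>z1\<close> at infinity. Reduction of order gives the second solution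
  \<open>z2 = z1 \<integral>\<^sub>r\<^sup>\<infinity> u\<^sup>-\<^sup>2\<close>, which therefore decays like \<open>r\<^sup>-\<^sup>1\<^sup>/\<^sup>2 exp (- \<surd>2 r)\<close>; near \<open>0\<close>,
  \<open>w \<ge> c r\<close> gives \<open>u\<^sup>-\<^sup>2 = O(r\<^sup>-\<^sup>3)\<close> and hence \<open>z2 = O(r\<^sup>-\<^sup>2)\<close>. The two solutions are
  independent because \<open>z1 \<ge> 1\<close> while \<open>z2 > 0\<close> tends to \<open>0\<close>.\<close>

section \<open>Second-order linear equations\<close>

lemma continuous_on_Icc_0_by_bound:
  fixes F G :: "real \<Rightarrow> real"
  assumes cont: "\<And>t. t > 0 \<Longrightarrow> isCont F t" and "F 0 = 0"
    and bound: "\<And>t. t > 0 \<Longrightarrow> \<bar>F t\<bar> \<le> G t" and lim: "(G \<longlongrightarrow> 0) (at_right 0)"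
  shows "continuous_on {0..b} F"
proof -
  have "\<forall>\<^sub>F t in at 0 within {0..}. norm (F t) \<le> G t"
    unfolding eventually_at_filter using bound by (auto intro!: always_eventually)
  moreover have "at 0 within {0..} = at_right (0::real)"
    unfolding at_within_def by (rule arg_cong[where f = "\<lambda>S. inf (nhds 0) (principal S)"]) auto
  then have "(G \<longlongrightarrow> 0) (at 0 within {0..})"
    using lim by simp
  ultimately have "(F \<longlongrightarrow> F 0) (at 0 within {0..})"
    using \<open>F 0 = 0\<close> by (auto intro: Lim_null_comparison)
  then have "continuous (at 0 within {0..b}) F"
    unfolding continuous_within by (rule tendsto_within_subset) auto
  then show ?thesis
    using cont unfolding continuous_on_eq_continuous_within
    by (metis atLeastAtMost_iff continuous_at_imp_continuous_within order_le_less)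
qed

lemma liouville_normal_form:
  fixes y y' m m' :: "real \<Rightarrow> real"
  assumes "(y has_real_derivative y' x) (at x)" "(y' has_real_derivative y'' x) (at x)"
    and "(m has_real_derivative m' x) (at x)" "(m' has_real_derivative m'' x) (at x)"
    and ode: "y'' x + P * y' x - Q * y x = 0" and "2 * m' x = P * m x" and "m x \<noteq> 0"
  shows "((\<lambda>t. m t * y t) has_real_derivative m' x * y x + m x * y' x) (at x)"
    and "((\<lambda>t. m' t * y t + m t * y' t) has_real_derivative (m'' x / m x + Q) * (m x * y x)) (at x)"
proof -
  show "((\<lambda>t. m t * y t) has_real_derivative m' x * y x + m x * y' x) (at x)"
    using assms by (auto intro!: derivative_eq_intros)
  have "m x * y'' x + 2 * m' x * y' x = m x * (y'' x + P * y' x) + (2 * m' x - P * m x) * y' x"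
    by (simp add: algebra_simps)
  also have "\<dots> = Q * (m x * y x)"
    using ode \<open>2 * m' x = P * m x\<close> by (simp add: algebra_simps)
  finally have normal: "m x * y'' x + 2 * m' x * y' x = Q * (m x * y x)" .
  have "m'' x * y x + m' x * y' x + (m' x * y' x + y'' x * m x)
      = m'' x * y x + (m x * y'' x + 2 * m' x * y' x)"
    by (simp add: algebra_simps)
  also have "\<dots> = (m'' x / m x + Q) * (m x * y x)"
    unfolding normal using \<open>m x \<noteq> 0\<close> by (simp add: field_simps)
  finally have "m'' x * y x + m' x * y' x + (m' x * y' x + y'' x * m x) = (m'' x / m x + Q) * (m x * y x)" .
  then show "((\<lambda>t. m' t * y t + m t * y' t) has_real_derivative (m'' x / m x + Q) * (m x * y x)) (at x)"
    using assms by (auto intro!: derivative_eq_intros)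
qed

lemma reduction_of_order:
  fixes y y' m I :: "real \<Rightarrow> real"
  assumes y: "(y has_real_derivative y' x) (at x)" "(y' has_real_derivative y'' x) (at x)"
    and m: "(m has_real_derivative m' x) (at x)"
    and I: "(I has_real_derivative - 1 / (m x * y x)\<^sup>2) (at x)"
    and ode: "y'' x + P * y' x - Q * y x = 0" and Pm: "2 * m' x = P * m x"
    and nz: "m x \<noteq> 0" "y x \<noteq> 0"
  shows "((\<lambda>t. y t * I t) has_real_derivative y' x * I x - 1 / ((m x)\<^sup>2 * y x)) (at x)"
    and "((\<lambda>t. y' t * I t - 1 / ((m t)\<^sup>2 * y t)) has_real_derivative
           y'' x * I x + 2 * m' x / ((m x)^3 * y x)) (at x)"
    and "(y'' x * I x + 2 * m' x / ((m x)^3 * y x)) + P * (y' x * I x - 1 / ((m x)\<^sup>2 * y x))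
           - Q * (y x * I x) = 0"
proof -
  show "((\<lambda>t. y t * I t) has_real_derivative y' x * I x - 1 / ((m x)\<^sup>2 * y x)) (at x)"
    using y I nz by (auto intro!: derivative_eq_intros simp: field_simps power2_eq_square)
  show "((\<lambda>t. y' t * I t - 1 / ((m t)\<^sup>2 * y t)) has_real_derivative
           y'' x * I x + 2 * m' x / ((m x)^3 * y x)) (at x)"
    using y m I nz
    by (auto intro!: derivative_eq_intros simp: field_simps power2_eq_square power3_eq_cube)
  have "(y'' x * I x + 2 * m' x / ((m x)^3 * y x)) + P * (y' x * I x - 1 / ((m x)\<^sup>2 * y x))
           - Q * (y x * I x) = I x * (y'' x + P * y' x - Q * y x) + (2 * m' x - P * m x) / ((m x)^3 * y x)"
    using nz by (simp add: field_simps power2_eq_square power3_eq_cube)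
  then show "(y'' x * I x + 2 * m' x / ((m x)^3 * y x)) + P * (y' x * I x - 1 / ((m x)\<^sup>2 * y x))
           - Q * (y x * I x) = 0"
    using ode Pm by simp
qed

section \<open>Exponential growth in normal form\<close>

text \<open>For \<open>u'' = Q u\<close> with \<open>u > 0\<close>, \<open>u' \<ge> 0\<close> and \<open>a\<^sup>2 - k/x\<^sup>2 \<le> Q \<le> a\<^sup>2\<close>, the quantity
  \<open>g = (u' + a u) exp (- a x)\<close> satisfies \<open>g' = (Q - a\<^sup>2) u exp (- a x)\<close>: it decreases, while
  \<open>g exp (- k / (a x))\<close> increases because \<open>a u exp (- a x) \<le> g\<close>. So \<open>g\<close> is pinched between
  positive constants, and integrating \<open>(u exp (a x))' = g exp (2 a x)\<close> pins \<open>u\<close> between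
  multiples of \<open>exp (a x)\<close>.\<close>
context
  fixes u u' Q :: "real \<Rightarrow> real" and a k R :: real
  assumes a_pos: "a > 0" and k_nonneg: "k \<ge> 0" and R_pos: "R > 0"
    and u_deriv: "\<And>x. x \<ge> R \<Longrightarrow> (u has_real_derivative u' x) (at x)"
    and u'_deriv: "\<And>x. x \<ge> R \<Longrightarrow> (u' has_real_derivative Q x * u x) (at x)"
    and u_pos: "\<And>x. x \<ge> R \<Longrightarrow> u x > 0"
    and u'_nonneg: "\<And>x. x \<ge> R \<Longrightarrow> u' x \<ge> 0"
    and Q_le: "\<And>x. x \<ge> R \<Longrightarrow> Q x \<le> a\<^sup>2"
    and Q_ge: "\<And>x. x \<ge> R \<Longrightarrow> a\<^sup>2 - k / x\<^sup>2 \<le> Q x"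
begin

definition growth_rate :: "real \<Rightarrow> real" where
  "growth_rate x = (u' x + a * u x) * exp (- a * x)"

lemma growth_rate_deriv:
  "x \<ge> R \<Longrightarrow> (growth_rate has_real_derivative (Q x - a\<^sup>2) * u x * exp (- a * x)) (at x)"
  unfolding growth_rate_def[abs_def]
  by (auto intro!: derivative_eq_intros u_deriv u'_deriv simp: algebra_simps power2_eq_square)

lemma growth_rate_ge: "x \<ge> R \<Longrightarrow> a * u x * exp (- a * x) \<le> growth_rate x"
  unfolding growth_rate_def using u'_nonneg by simp

lemma growth_rate_pos: "x \<ge> R \<Longrightarrow> growth_rate x > 0"
  using growth_rate_ge[of x] u_pos[of x] a_pos by (smt (verit) exp_gt_zero mult_pos_pos)

lemma growth_rate_antimono: assumes "R \<le> x" "x \<le> y" shows "growth_rate y \<le> growth_rate x"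
proof (rule deriv_nonpos_imp_antimono[OF _ _ \<open>x \<le> y\<close>])
  fix t assume t: "t \<in> {x..y}"
  then show "(growth_rate has_real_derivative (Q t - a\<^sup>2) * u t * exp (- a * t)) (at t)"
    using assms by (intro growth_rate_deriv) auto
  show "(Q t - a\<^sup>2) * u t * exp (- a * t) \<le> 0"
    using Q_le[of t] u_pos[of t] t assms by (simp add: mult_nonpos_nonneg)
qed

lemma growth_rate_lower:
  assumes "R \<le> x" shows "growth_rate R * exp (- k / (a * R)) \<le> growth_rate x"
proof -
  let ?G = "\<lambda>x. growth_rate x * exp (- k / (a * x))"
  let ?G' = "\<lambda>x. exp (- k / (a * x)) * ((Q x - a\<^sup>2) * u x * exp (- a * x) + k / (a * x\<^sup>2) * growth_rate x)"
  have "?G R \<le> ?G x"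
  proof (rule deriv_nonneg_imp_mono[OF _ _ assms])
    fix t assume t: "t \<in> {R..x}"
    then have "t > 0" using R_pos by auto
    then show "(?G has_real_derivative ?G' t) (at t)"
      using t a_pos by (auto intro!: derivative_eq_intros growth_rate_deriv simp: field_simps power2_eq_square)
    have "(- (k / t\<^sup>2)) * (u t * exp (- a * t)) \<le> (Q t - a\<^sup>2) * (u t * exp (- a * t))"
      using Q_ge[of t] t u_pos[of t] by (intro mult_right_mono) auto
    then have "- (k / t\<^sup>2 * (u t * exp (- a * t))) \<le> (Q t - a\<^sup>2) * (u t * exp (- a * t))"
      by (metis minus_mult_left)
    moreover have "k / t\<^sup>2 * (u t * exp (- a * t)) \<le> k / t\<^sup>2 * (growth_rate t / a)"
      using growth_rate_ge[of t] t a_pos k_nonneg by (intro mult_left_mono) (auto simp: field_simps)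
    moreover have "k / t\<^sup>2 * (growth_rate t / a) = k / (a * t\<^sup>2) * growth_rate t"
      by simp
    ultimately have "0 \<le> (Q t - a\<^sup>2) * (u t * exp (- a * t)) + k / (a * t\<^sup>2) * growth_rate t"
      by linarith
    then show "0 \<le> ?G' t" by (simp add: mult.assoc)
  qed
  also have "?G x \<le> growth_rate x"
    using growth_rate_pos[of x] assms R_pos a_pos k_nonneg
    by (intro mult_left_le) (auto simp: field_simps)
  finally show ?thesis .
qed

definition tilted :: "real \<Rightarrow> real \<Rightarrow> real" where
  "tilted c x = u x * exp (a * x) - c * exp (2 * a * x) / (2 * a)"

lemma tilted_deriv:
  assumes "x \<ge> R"
  shows "(tilted c has_real_derivative exp (2 * a * x) * (growth_rate x - c)) (at x)"
proof -
  have "exp (2 * a * x) * growth_rate x = (u' x + a * u x) * exp (a * x)"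
    unfolding growth_rate_def by (simp add: algebra_simps flip: exp_add)
  then show ?thesis
    unfolding tilted_def[abs_def]
    using assms a_pos by (auto intro!: derivative_eq_intros u_deriv simp: algebra_simps)
qed

lemma u_eq_tilted: "u x = tilted c x * exp (- a * x) + c / (2 * a) * exp (a * x)"
  unfolding tilted_def using a_pos by (simp add: field_simps flip: exp_add)

lemma growth_bigo_exp: "u \<in> O[at_top](\<lambda>x. exp (a * x))"
proof -
  let ?c = "growth_rate R"
  define A B where "A = tilted ?c R" and "B = ?c / (2 * a)"
  let ?U = "\<lambda>x. A * exp (- a * x) + B * exp (a * x)"
  have bound: "u x \<le> ?U x" if x: "x \<ge> R" for x
  proof -
    have "tilted ?c x \<le> tilted ?c R"
    proof (rule deriv_nonpos_imp_antimono[OF _ _ x])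
      fix t assume "t \<in> {R..x}"
      then show "(tilted ?c has_real_derivative exp (2 * a * t) * (growth_rate t - ?c)) (at t)"
        and "exp (2 * a * t) * (growth_rate t - ?c) \<le> 0"
        using tilted_deriv growth_rate_antimono[of R t] by (auto simp: mult_nonneg_nonpos)
    qed
    then show ?thesis
      unfolding A_def B_def by (subst u_eq_tilted[of _ ?c]) (simp add: mult_right_mono)
  qed
  have "norm (u x) \<le> norm (?U x)" if "x \<ge> R" for x
    using bound[OF that] u_pos[OF that] by simp
  then have "\<forall>\<^sub>F x in at_top. norm (u x) \<le> norm (?U x)"
    unfolding eventually_at_top_linorder by blast
  then have "u \<in> O[at_top](?U)" by (rule landau_o.big_mono)
  also have "?U \<in> O[at_top](\<lambda>x. exp (a * x))" using a_pos by real_asymp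
  finally show ?thesis .
qed

lemma growth_bigomega_exp: "u \<in> \<Omega>[at_top](\<lambda>x. exp (a * x))"
proof -
  define c where "c = growth_rate R * exp (- k / (a * R))"
  have c: "c > 0" unfolding c_def using growth_rate_pos[of R] by simp
  define A where "A = tilted c R"
  let ?L = "\<lambda>x. A * exp (- a * x) + c / (2 * a) * exp (a * x)"
  have bound: "?L x \<le> u x" if x: "x \<ge> R" for x
  proof -
    have "tilted c R \<le> tilted c x"
    proof (rule deriv_nonneg_imp_mono[OF _ _ x])
      fix t assume "t \<in> {R..x}"
      then show "(tilted c has_real_derivative exp (2 * a * t) * (growth_rate t - c)) (at t)"
        and "exp (2 * a * t) * (growth_rate t - c) \<ge> 0"
        using tilted_deriv growth_rate_lower[of t] unfolding c_def by auto
    qed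
    then show ?thesis
      unfolding A_def by (subst u_eq_tilted[of _ c]) (simp add: mult_right_mono)
  qed
  have "\<forall>\<^sub>F x in at_top. 0 \<le> ?L x" using a_pos c by real_asymp
  moreover have "\<forall>\<^sub>F x in at_top. x \<ge> R" by (rule eventually_ge_at_top)
  ultimately have "\<forall>\<^sub>F x in at_top. norm (?L x) \<le> norm (u x)"
  proof eventually_elim
    case (elim x)
    then show ?case using bound[of x] u_pos[of x] by simp
  qed
  then have "?L \<in> O[at_top](u)" by (rule landau_o.big_mono)
  moreover have "(\<lambda>x. exp (a * x)) \<in> O[at_top](?L)" using a_pos c by real_asymp
  ultimately show ?thesis unfolding bigomega_iff_bigo using landau_o.big_trans by blast
qed

lemma growth_bigtheta_exp: "u \<in> \<Theta>[at_top](\<lambda>x. exp (a * x))"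
  using growth_bigo_exp growth_bigomega_exp by (rule bigthetaI)

end

lemma integrable_on_atLeast_exp_bound:
  fixes f :: "real \<Rightarrow> real"
  assumes cont: "continuous_on {b..} f" and bound: "\<And>x. x \<ge> b \<Longrightarrow> \<bar>f x\<bar> \<le> C * exp (- c * x)"
    and c: "c > 0"
  shows "f integrable_on {b..}"
proof (rule integrable_on_all_intervals_integrable_bound)
  show "(\<lambda>x. if x \<in> {b..} then f x else 0) integrable_on cbox s t" for s t
  proof -
    have "f integrable_on {max b s..t}"
      by (intro integrable_continuous_real continuous_on_subset[OF cont]) auto
    moreover have "{b..} \<inter> cbox s t = {max b s..t}" by auto
    ultimately show ?thesis by (subst integrable_restrict_Int) (simp only:)
  qed
  show "norm (f x) \<le> C * exp (- c * x)" if "x \<in> {b..}" for x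
    using bound that by auto
  show "(\<lambda>x. C * exp (- c * x)) integrable_on {b..}"
    using integrable_on_cmult_left[OF integrable_on_exp_minus_to_infinity[OF c]] by simp
qed

lemma tail_integral_bigo_exp:
  fixes f :: "real \<Rightarrow> real"
  assumes cont: "continuous_on {a..} f" and bigo: "f \<in> O[at_top](\<lambda>x. exp (- c * x))" and c: "c > 0"
  shows "f integrable_on {a..}" and "(\<lambda>r. integral {r..} f) \<in> O[at_top](\<lambda>r. exp (- c * r))"
proof -
  obtain C where "C > 0" "\<forall>\<^sub>F x in at_top. norm (f x) \<le> C * norm (exp (- c * x))"
    using bigo by (elim landau_o.bigE)
  then obtain N where N: "\<And>x. x \<ge> N \<Longrightarrow> \<bar>f x\<bar> \<le> C * exp (- c * x)"
    unfolding eventually_at_top_linorder by auto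
  have tail: "f integrable_on {b..}" if "b \<ge> max a N" for b
    using that N c by (intro integrable_on_atLeast_exp_bound[where C = C] continuous_on_subset[OF cont]) auto
  show "f integrable_on {a..}"
  proof (rule integrable_Un')
    show "f integrable_on {a..max a N}"
      by (intro integrable_continuous_real continuous_on_subset[OF cont]) auto
    show "f integrable_on {max a N..}" by (rule tail) simp
    show "negligible ({a..max a N} \<inter> {max a N..})"
      by (rule negligible_subset[OF negligible_sing[of "max a N"]]) auto
  qed auto
  have bound: "norm (integral {r..} f) \<le> C / c * norm (exp (- c * r))" if r: "r \<ge> max a N" for r
  proof -
    have "norm (integral {r..} f) \<le> integral {r..} (\<lambda>x. C * exp (- c * x))"
      using integrable_on_cmult_left[OF integrable_on_exp_minus_to_infinity[OF c], of C r]
      by (intro integral_norm_bound_integral[OF tail[OF r]]) (use N r in auto)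
    also have "\<dots> = C * (exp (- c * r) / c)"
      using has_integral_exp_minus_to_infinity[OF c, of r]
      by (intro integral_unique has_integral_mult_right)
    finally show ?thesis by simp
  qed
  have "\<forall>\<^sub>F r in at_top. norm (integral {r..} f) \<le> C / c * norm (exp (- c * r))"
    unfolding eventually_at_top_linorder using bound by blast
  then show "(\<lambda>r. integral {r..} f) \<in> O[at_top](\<lambda>r. exp (- c * r))"
    using \<open>C > 0\<close> c by (intro landau_o.bigI[of "C / c"]) auto
qed

section \<open>The solution regular at the origin\<close>

locale monotone_profile =
  fixes w w' :: "real \<Rightarrow> real"
  assumes w_deriv: "\<And>r. r > 0 \<Longrightarrow> (w has_real_derivative w' r) (at r)"
    and w_pos: "\<And>r. r > 0 \<Longrightarrow> 0 < w r"
    and w_less_1: "\<And>r. r > 0 \<Longrightarrow> w r < 1"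
    and w'_pos: "\<And>r. r > 0 \<Longrightarrow> 0 < w' r"
    and w_0: "w 0 = 0"
begin

lemma w_nonneg: "0 \<le> t \<Longrightarrow> 0 \<le> w t"
  using w_0 w_pos by (cases "t = 0") (auto intro: less_imp_le)

lemma w_le_1: "0 \<le> t \<Longrightarrow> w t \<le> 1"
  using w_0 w_less_1 by (cases "t = 0") (auto intro: less_imp_le)

lemma w_mono: assumes "0 \<le> t" "t \<le> s" shows "w t \<le> w s"
proof (cases "t = 0")
  case True
  then show ?thesis using w_0 w_nonneg assms by simp
next
  case False
  with assms have "t > 0" by simp
  show ?thesis
    by (rule deriv_nonneg_imp_mono[of t s w w']) (use \<open>t > 0\<close> assms w_deriv w'_pos in \<open>auto intro: less_imp_le\<close>)
qed

lemma isCont_w: "t > 0 \<Longrightarrow> isCont w t"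
  using w_deriv DERIV_isCont by blast

definition p :: "real \<Rightarrow> real" where "p s = s * (w s)\<^sup>2"
definition q :: "real \<Rightarrow> real" where "q t = 2 * t * (w t)^4"

text \<open>As \<open>w \<le> 1\<close> increases, \<open>p\<^sup>-\<^sup>1 \<integral>\<^sub>0\<^sup>s q f \<le> s exp (s\<^sup>2/2)\<close> whenever \<open>f \<le> exp (r\<^sup>2/2)\<close>,
  so the Picard operator preserves admissibility.\<close>
definition majorant :: "real \<Rightarrow> real" where "majorant r = exp (r\<^sup>2 / 2)"

definition admissible :: "(real \<Rightarrow> real) \<Rightarrow> bool" where
  "admissible f \<longleftrightarrow> (\<forall>b. continuous_on {0..b} f) \<and> (\<forall>r\<ge>0. 0 \<le> f r \<and> f r \<le> majorant r)"

definition qint :: "(real \<Rightarrow> real) \<Rightarrow> real \<Rightarrow> real" where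
  "qint f s = integral {0..s} (\<lambda>t. q t * f t)"

definition picard_deriv :: "(real \<Rightarrow> real) \<Rightarrow> real \<Rightarrow> real" where
  "picard_deriv f s = qint f s / p s"

definition picard :: "(real \<Rightarrow> real) \<Rightarrow> real \<Rightarrow> real" where
  "picard f r = 1 + integral {0..r} (picard_deriv f)"

lemma p_pos: "s > 0 \<Longrightarrow> p s > 0"
  unfolding p_def using w_pos[of s] by simp

lemma p_deriv: "s > 0 \<Longrightarrow> (p has_real_derivative (w s)\<^sup>2 + 2 * s * w s * w' s) (at s)"
  unfolding p_def by (auto intro!: derivative_eq_intros w_deriv simp: power2_eq_square)

lemma q_nonneg: "t \<ge> 0 \<Longrightarrow> q t \<ge> 0"
  unfolding q_def using w_nonneg by simp

lemma q_le: assumes "0 \<le> t" "t \<le> s" shows "q t \<le> 2 * t * (w s)^4"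
  unfolding q_def using assms w_mono[OF assms] w_nonneg[of t]
  by (intro mult_left_mono power_mono) auto

lemma continuous_on_q: "continuous_on {0..b} q"
proof (rule continuous_on_Icc_0_by_bound)
  show "isCont q t" if "t > 0" for t
    unfolding q_def using that by (intro continuous_intros isCont_w)
  show "\<bar>q t\<bar> \<le> 2 * t" if "t > 0" for t
  proof -
    have "(w t)^4 \<le> 1" using w_nonneg[of t] w_le_1[of t] that by (simp add: power_le_one)
    then show ?thesis unfolding q_def using that w_nonneg[of t] by (simp add: abs_mult mult_le_cancel_left1)
  qed
  show "((\<lambda>t::real. 2 * t) \<longlongrightarrow> 0) (at_right 0)" by real_asymp
qed (simp add: q_def)

lemma majorant_deriv: "(majorant has_real_derivative r * majorant r) (at r)"
  unfolding majorant_def by (auto intro!: derivative_eq_intros simp: power2_eq_square)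

lemma majorant_ge_1: "r \<ge> 0 \<Longrightarrow> majorant r \<ge> 1"
  unfolding majorant_def by simp

lemma majorant_mono: "0 \<le> t \<Longrightarrow> t \<le> s \<Longrightarrow> majorant t \<le> majorant s"
  unfolding majorant_def by (simp add: power_mono)

lemma has_integral_majorant: assumes "0 \<le> r"
  shows "((\<lambda>s. s * majorant s) has_integral (majorant r - 1)) {0..r}"
proof -
  have "((\<lambda>s. s * majorant s) has_integral (majorant r - majorant 0)) {0..r}"
    using assms majorant_deriv
    by (intro fundamental_theorem_of_calculus)
      (auto simp: has_real_derivative_iff_has_vector_derivative[symmetric] intro: has_field_derivative_at_within)
  then show ?thesis by (simp add: majorant_def)
qed

lemma admissibleD:
  assumes "admissible f"
  shows "continuous_on {0..b} f" and "r \<ge> 0 \<Longrightarrow> 0 \<le> f r" and "r \<ge> 0 \<Longrightarrow> f r \<le> majorant r"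
  using assms unfolding admissible_def by blast+

lemma continuous_on_q_mult: "admissible f \<Longrightarrow> continuous_on {0..b} (\<lambda>t. q t * f t)"
  by (intro continuous_intros continuous_on_q admissibleD)

lemma qint_deriv: assumes "admissible f" "t > 0" shows "(qint f has_real_derivative q t * f t) (at t)"
proof -
  have "(qint f has_real_derivative q t * f t) (at t within {0..t+1})"
    unfolding qint_def by (rule integral_has_real_derivative) (use assms continuous_on_q_mult in auto)
  then show ?thesis using assms by (simp add: at_within_Icc_at)
qed

lemma qint_nonneg: assumes "admissible f" "s \<ge> 0" shows "0 \<le> qint f s"
  unfolding qint_def using assms
  by (intro integral_nonneg integrable_continuous_real continuous_on_q_mult)
    (auto intro!: mult_nonneg_nonneg q_nonneg admissibleD(2)[OF assms(1)])

lemma qint_le: assumes "admissible f" "s \<ge> 0" shows "qint f s \<le> majorant s * (w s)^4 * s\<^sup>2"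
proof -
  have "((\<lambda>t::real. 2 * t) has_integral s\<^sup>2 - 0\<^sup>2) {0..s}"
    using assms by (intro fundamental_theorem_of_calculus)
      (auto intro!: derivative_eq_intros simp: has_real_derivative_iff_has_vector_derivative[symmetric])
  then have "((\<lambda>t. (majorant s * (w s)^4) * (2 * t)) has_integral (majorant s * (w s)^4) * s\<^sup>2) {0..s}"
    by (intro has_integral_mult_right) simp
  moreover have "q t * f t \<le> (majorant s * (w s)^4) * (2 * t)" if t: "t \<in> {0..s}" for t
  proof -
    have "f t \<le> majorant s" using admissibleD(3)[OF assms(1), of t] majorant_mono[of t s] t by auto
    then have "q t * f t \<le> (2 * t * (w s)^4) * majorant s"
      by (intro mult_mono) (use t q_le admissibleD(2)[OF assms(1)] w_nonneg in auto)
    then show ?thesis by (simp add: algebra_simps)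
  qed
  ultimately show ?thesis
    unfolding qint_def using assms
    by (intro has_integral_le[OF integrable_integral]) (auto intro: integrable_continuous_real continuous_on_q_mult)
qed

lemma qint_mono:
  assumes "admissible f" "admissible g" "\<And>t. t \<ge> 0 \<Longrightarrow> f t \<le> g t" "s \<ge> 0"
  shows "qint f s \<le> qint g s"
  unfolding qint_def using assms
  by (intro integral_le integrable_continuous_real continuous_on_q_mult)
    (auto intro: mult_left_mono q_nonneg)

lemma picard_deriv_nonneg: "admissible f \<Longrightarrow> s \<ge> 0 \<Longrightarrow> 0 \<le> picard_deriv f s"
  unfolding picard_deriv_def p_def using qint_nonneg by simp

lemma picard_deriv_le: assumes "admissible f" "s \<ge> 0" shows "picard_deriv f s \<le> s * majorant s"
proof (cases "s = 0")
  case True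
  then show ?thesis by (simp add: picard_deriv_def p_def)
next
  case False
  with assms have s: "s > 0" by simp
  have "(w s)\<^sup>2 \<le> 1" using w_nonneg[of s] w_le_1[of s] s by (simp add: power_le_one)
  then have "majorant s * (w s)\<^sup>2 * s \<le> s * majorant s"
    using s majorant_ge_1[of s] by (simp add: mult.commute mult_left_le)
  then have "(majorant s * (w s)\<^sup>2 * s) * p s \<le> (s * majorant s) * p s"
    using p_pos[OF s] by (simp add: mult_right_mono)
  moreover have "majorant s * (w s)^4 * s\<^sup>2 = (majorant s * (w s)\<^sup>2 * s) * p s"
    unfolding p_def by (simp add: power2_eq_square power4_eq_xxxx)
  ultimately have "majorant s * (w s)^4 * s\<^sup>2 \<le> (s * majorant s) * p s" by linarith
  then show ?thesis
    unfolding picard_deriv_def using qint_le[OF assms] p_pos[OF s] by (simp add: divide_le_eq)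
qed

lemma continuous_on_picard_deriv: assumes "admissible f" shows "continuous_on {0..b} (picard_deriv f)"
proof (rule continuous_on_Icc_0_by_bound)
  show "isCont (picard_deriv f) t" if t: "t > 0" for t
  proof -
    have "isCont p t" "isCont (qint f) t"
      using p_deriv[OF t] qint_deriv[OF assms t] DERIV_isCont by blast+
    then show ?thesis
      unfolding picard_deriv_def[abs_def] using p_pos[OF t] by (intro continuous_intros) auto
  qed
  show "\<bar>picard_deriv f t\<bar> \<le> t * majorant t" if "t > 0" for t
    using that picard_deriv_le[OF assms] picard_deriv_nonneg[OF assms] by simp
  show "((\<lambda>t. t * majorant t) \<longlongrightarrow> 0) (at_right 0)"
    unfolding majorant_def by real_asymp
qed (simp add: picard_deriv_def p_def)

lemma picard_deriv_integrable: "admissible f \<Longrightarrow> picard_deriv f integrable_on {0..b}"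
  by (intro integrable_continuous_real continuous_on_picard_deriv)

lemma picard_has_deriv:
  assumes "admissible f" "t > 0" shows "(picard f has_real_derivative picard_deriv f t) (at t)"
proof -
  have "((\<lambda>r. integral {0..r} (picard_deriv f)) has_real_derivative picard_deriv f t) (at t within {0..t+1})"
    by (rule integral_has_real_derivative) (use assms continuous_on_picard_deriv in auto)
  then show ?thesis
    unfolding picard_def[abs_def] using assms by (auto intro!: derivative_eq_intros simp: at_within_Icc_at)
qed

lemma picard_ge_1: assumes "admissible f" "r \<ge> 0" shows "1 \<le> picard f r"
proof -
  have "0 \<le> integral {0..r} (picard_deriv f)"
    by (rule integral_nonneg) (use assms picard_deriv_integrable picard_deriv_nonneg in auto)
  then show ?thesis unfolding picard_def by simp
qed

lemma picard_le_majorant: assumes "admissible f" "r \<ge> 0" shows "picard f r \<le> majorant r"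
proof -
  have "((\<lambda>s. s * majorant s) has_integral (majorant r - 1)) {0..r}"
    using has_integral_majorant[OF assms(2)] .
  then have "integral {0..r} (picard_deriv f) \<le> majorant r - 1"
    using assms by (intro has_integral_le[OF integrable_integral[OF picard_deriv_integrable]])
      (auto intro: picard_deriv_le)
  then show ?thesis unfolding picard_def by simp
qed

lemma picard_mono:
  assumes "admissible f" "admissible g" "\<And>t. t \<ge> 0 \<Longrightarrow> f t \<le> g t" "r \<ge> 0"
  shows "picard f r \<le> picard g r"
proof -
  have deriv_le: "picard_deriv f s \<le> picard_deriv g s" if "s \<in> {0..r}" for s
    unfolding picard_deriv_def using qint_mono[OF assms(1-3)] that p_def w_nonneg
    by (intro divide_right_mono) auto
  show ?thesis
    unfolding picard_def
    by (intro add_left_mono integral_le) (use assms deriv_le picard_deriv_integrable in auto)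
qed

lemma admissible_picard: assumes "admissible f" shows "admissible (picard f)"
  unfolding admissible_def
proof (intro conjI allI impI)
  show "continuous_on {0..b} (picard f)" for b
    unfolding picard_def by (intro continuous_intros indefinite_integral_continuous_1 picard_deriv_integrable assms)
qed (use assms picard_ge_1 picard_le_majorant in \<open>auto intro: order_trans[of 0 1]\<close>)

definition picard_iter :: "nat \<Rightarrow> real \<Rightarrow> real" where
  "picard_iter n = (picard ^^ n) (\<lambda>_. 1)"

lemma picard_iter_Suc: "picard_iter (Suc n) = picard (picard_iter n)"
  unfolding picard_iter_def by simp

lemma admissible_picard_iter: "admissible (picard_iter n)"
proof (induction n)
  case 0
  then show ?case unfolding picard_iter_def admissible_def using majorant_ge_1 by auto
next
  case (Suc n)
  then show ?case unfolding picard_iter_Suc by (rule admissible_picard)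
qed

lemma picard_iter_mono: "r \<ge> 0 \<Longrightarrow> picard_iter n r \<le> picard_iter (Suc n) r"
proof (induction n arbitrary: r)
  case 0
  then show ?case using picard_ge_1[OF admissible_picard_iter[of 0]] by (simp add: picard_iter_def)
next
  case (Suc n)
  then show ?case
    unfolding picard_iter_Suc[of "Suc n"] picard_iter_Suc[of n]
    by (intro picard_mono admissible_picard_iter admissible_picard) (auto simp: picard_iter_Suc)
qed

definition z1 :: "real \<Rightarrow> real" where "z1 r = (SUP n. picard_iter n r)"

lemma picard_iter_tendsto: assumes "r \<ge> 0" shows "(\<lambda>n. picard_iter n r) \<longlonglongrightarrow> z1 r"
  unfolding z1_def
proof (rule LIMSEQ_incseq_SUP)
  show "bdd_above (range (\<lambda>n. picard_iter n r))"
    using admissibleD(3)[OF admissible_picard_iter assms] by (intro bdd_aboveI[of _ "majorant r"]) auto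
  show "incseq (\<lambda>n. picard_iter n r)"
    using picard_iter_mono[OF assms] by (intro incseq_SucI) auto
qed

lemma z1_ge_1: "r \<ge> 0 \<Longrightarrow> 1 \<le> z1 r"
  using picard_ge_1[OF admissible_picard_iter] picard_iter_Suc
  by (intro LIMSEQ_le_const[OF LIMSEQ_Suc[OF picard_iter_tendsto]]) auto

lemma z1_le_majorant: "r \<ge> 0 \<Longrightarrow> z1 r \<le> majorant r"
  by (rule LIMSEQ_le_const2[OF picard_iter_tendsto]) (auto intro: admissibleD admissible_picard_iter)

lemma qint_tendsto:
  assumes "s \<ge> 0"
  shows "(\<lambda>t. q t * z1 t) integrable_on {0..s} \<and> (\<lambda>n. qint (picard_iter n) s) \<longlonglongrightarrow> qint z1 s"
  unfolding qint_def
proof (rule monotone_convergence_increasing)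
  show "(\<lambda>t. q t * picard_iter n t) integrable_on {0..s}" for n
    by (intro integrable_continuous_real continuous_on_q_mult admissible_picard_iter)
  show "q t * picard_iter n t \<le> q t * picard_iter (Suc n) t" if "t \<in> {0..s}" for n t
    using that picard_iter_mono q_nonneg by (auto intro: mult_left_mono)
  show "(\<lambda>n. q t * picard_iter n t) \<longlonglongrightarrow> q t * z1 t" if "t \<in> {0..s}" for t
    using that picard_iter_tendsto by (auto intro: tendsto_mult_left)
  have "norm (qint (picard_iter n) s) \<le> majorant s * (w s)^4 * s\<^sup>2" for n
    using qint_nonneg qint_le admissible_picard_iter assms by auto
  then show "bounded (range (\<lambda>n. integral {0..s} (\<lambda>t. q t * picard_iter n t)))"
    unfolding qint_def by (intro boundedI) auto
qed

lemma picard_tendsto: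
  assumes "r \<ge> 0"
  shows "picard_deriv z1 integrable_on {0..r} \<and> (\<lambda>n. picard (picard_iter n) r) \<longlonglongrightarrow> picard z1 r"
proof -
  have "picard_deriv z1 integrable_on {0..r} \<and>
      (\<lambda>n. integral {0..r} (picard_deriv (picard_iter n))) \<longlonglongrightarrow> integral {0..r} (picard_deriv z1)"
  proof (rule monotone_convergence_increasing)
    show "picard_deriv (picard_iter n) integrable_on {0..r}" for n
      by (rule picard_deriv_integrable[OF admissible_picard_iter])
    show "picard_deriv (picard_iter n) t \<le> picard_deriv (picard_iter (Suc n)) t" if "t \<in> {0..r}" for n t
      unfolding picard_deriv_def using that p_def w_nonneg picard_iter_mono
      by (intro divide_right_mono qint_mono admissible_picard_iter) auto
    show "(\<lambda>n. picard_deriv (picard_iter n) t) \<longlonglongrightarrow> picard_deriv z1 t" if "t \<in> {0..r}" for t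
      unfolding picard_deriv_def divide_inverse using that qint_tendsto by (auto intro: tendsto_mult_right)
    have "norm (integral {0..r} (picard_deriv (picard_iter n))) \<le> majorant r" for n
      using picard_ge_1 picard_le_majorant admissible_picard_iter assms unfolding picard_def
      by (smt (verit) real_norm_def)
    then show "bounded (range (\<lambda>n. integral {0..r} (picard_deriv (picard_iter n))))"
      by (intro boundedI) auto
  qed
  then show ?thesis unfolding picard_def by (auto intro: tendsto_add)
qed

lemma picard_z1: assumes "r \<ge> 0" shows "picard z1 r = z1 r"
proof -
  have "(\<lambda>n. picard_iter (Suc n) r) \<longlonglongrightarrow> picard z1 r"
    unfolding picard_iter_Suc using picard_tendsto[OF assms] by blast
  then show ?thesis using LIMSEQ_unique LIMSEQ_Suc[OF picard_iter_tendsto[OF assms]] by blast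
qed

lemma admissible_z1: "admissible z1"
  unfolding admissible_def
proof (intro conjI allI impI)
  show "continuous_on {0..b} z1" for b
  proof -
    have "continuous_on {0..b} (picard z1)"
      unfolding picard_def
      by (intro continuous_intros indefinite_integral_continuous_1)
        (use picard_tendsto[of "max b 0"] in \<open>auto intro: integrable_on_subinterval\<close>)
    then show ?thesis by (rule continuous_on_cong[THEN iffD1, rotated 2]) (auto simp: picard_z1)
  qed
qed (use z1_ge_1 z1_le_majorant in \<open>auto intro: order_trans[of 0 1]\<close>)

definition z1'' :: "real \<Rightarrow> real" where
  "z1'' r = (q r * z1 r * p r - qint z1 r * ((w r)\<^sup>2 + 2 * r * w r * w' r)) / (p r)\<^sup>2"

lemma z1_deriv: assumes "r > 0" shows "(z1 has_real_derivative picard_deriv z1 r) (at r)"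
proof (rule has_field_derivative_transform_within_open[of "picard z1" _ _ "{0<..}"])
  show "(picard z1 has_real_derivative picard_deriv z1 r) (at r)"
    by (rule picard_has_deriv[OF admissible_z1 assms])
qed (use assms picard_z1 in auto)

lemma picard_deriv_z1_deriv: assumes "r > 0" shows "(picard_deriv z1 has_real_derivative z1'' r) (at r)"
  unfolding picard_deriv_def[abs_def] z1''_def
  using qint_deriv[OF admissible_z1 assms] p_deriv[OF assms] p_pos[OF assms]
  by (auto intro!: derivative_eq_intros simp: power2_eq_square)

lemma z1_ode:
  assumes "r > 0"
  shows "z1'' r + (2 * w' r / w r + 1 / r) * picard_deriv z1 r - 2 * (w r)\<^sup>2 * z1 r = 0"
  using w_pos[OF assms] assms
  unfolding z1''_def picard_deriv_def p_def q_def
  by (simp add: field_simps power2_eq_square power4_eq_xxxx)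

lemma is_lin_sol_z1: "is_lin_sol w w' z1 (picard_deriv z1) z1''"
  unfolding is_lin_sol_def using z1_deriv picard_deriv_z1_deriv z1_ode by blast

end

section \<open>Normal form and the decaying solution\<close>

locale vortex_profile = monotone_profile +
  fixes w'' :: "real \<Rightarrow> real"
  assumes w'_deriv: "\<And>r. r > 0 \<Longrightarrow> (w' has_real_derivative w'' r) (at r)"
    and profile_ode: "\<And>r. r > 0 \<Longrightarrow> w'' r + w' r / r - w r / r\<^sup>2 + (1 - (w r)\<^sup>2) * w r = 0"
    and w_near_0: "\<exists>\<alpha>>0. (\<lambda>r. w r - \<alpha> * r) \<in> O[at_right 0](\<lambda>r. r ^ 3)"
    and w_at_top: "(\<lambda>r. w r - (1 - 1 / (2 * r\<^sup>2))) \<in> O[at_top](\<lambda>r. 1 / r ^ 4)"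
begin

text \<open>Multiplying by \<open>m = \<surd>r w\<close>, which satisfies \<open>2 m' = (2 w'/w + 1/r) m\<close>, removes the
  first-order term; the profile equation turns the new coefficient into \<open>potential\<close>.\<close>
definition m :: "real \<Rightarrow> real" where "m r = sqrt r * w r"
definition m' :: "real \<Rightarrow> real" where "m' r = w r / (2 * sqrt r) + sqrt r * w' r"
definition m'' :: "real \<Rightarrow> real" where
  "m'' r = w' r / sqrt r - w r / (4 * r * sqrt r) + sqrt r * w'' r"

definition potential :: "real \<Rightarrow> real" where "potential r = 3 * (w r)\<^sup>2 - 1 + 3 / (4 * r\<^sup>2)"

definition u :: "real \<Rightarrow> real" where "u r = m r * z1 r"
definition u' :: "real \<Rightarrow> real" where "u' r = m' r * z1 r + m r * picard_deriv z1 r"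

lemma m_pos: "r > 0 \<Longrightarrow> m r > 0"
  unfolding m_def using w_pos by simp

lemma m_deriv: "r > 0 \<Longrightarrow> (m has_real_derivative m' r) (at r)"
  unfolding m_def[abs_def] m'_def
  by (auto intro!: derivative_eq_intros w_deriv simp: field_simps)

lemma m'_deriv: assumes "r > 0" shows "(m' has_real_derivative m'' r) (at r)"
proof -
  have "sqrt r * sqrt r = r" using assms by simp
  then show ?thesis
    unfolding m'_def[abs_def] m''_def using assms
    by (auto intro!: derivative_eq_intros w_deriv w'_deriv simp: field_simps)
qed

lemma m'_eq: assumes "r > 0" shows "2 * m' r = (2 * w' r / w r + 1 / r) * m r"
proof -
  obtain s where s: "s > 0" "r = s\<^sup>2" using assms by (metis real_sqrt_gt_0_iff real_sqrt_pow2 less_imp_le)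
  then show ?thesis
    unfolding m'_def m_def using w_pos[OF assms] by (simp add: field_simps power2_eq_square)
qed

lemma m''_eq: assumes "r > 0" shows "m'' r / m r + 2 * (w r)\<^sup>2 = potential r"
proof -
  have w'': "w'' r = - w' r / r + w r / r\<^sup>2 - (1 - (w r)\<^sup>2) * w r"
    using profile_ode[OF assms] by (simp add: algebra_simps)
  obtain s where s: "s > 0" "r = s\<^sup>2" using assms by (metis real_sqrt_gt_0_iff real_sqrt_pow2 less_imp_le)
  then show ?thesis
    unfolding m''_def m_def potential_def w'' using w_pos[OF assms]
    by (simp add: field_simps power2_eq_square)
qed

lemma
  assumes "r > 0"
  shows u_deriv: "(u has_real_derivative u' r) (at r)"
    and u'_deriv: "(u' has_real_derivative potential r * u r) (at r)"
proof -
  have "m r \<noteq> 0" using m_pos[OF assms] by simp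
  note normal_form = liouville_normal_form[where y = z1 and y' = "picard_deriv z1" and y'' = z1''
      and m = m and m' = m' and m'' = m'' and x = r,
      OF z1_deriv[OF assms] picard_deriv_z1_deriv[OF assms] m_deriv[OF assms] m'_deriv[OF assms]
      z1_ode[OF assms] m'_eq[OF assms] this]
  show "(u has_real_derivative u' r) (at r)"
    unfolding u_def[abs_def] u'_def using normal_form(1) .
  show "(u' has_real_derivative potential r * u r) (at r)"
    unfolding u_def u'_def[abs_def] using normal_form(2) m''_eq[OF assms] by simp
qed

lemma u_pos: "r > 0 \<Longrightarrow> u r > 0"
  unfolding u_def using m_pos z1_ge_1[of r] by simp

lemma u'_nonneg: assumes "r > 0" shows "u' r \<ge> 0"
proof -
  have "m' r \<ge> 0" unfolding m'_def using w_pos[OF assms] w'_pos[OF assms] assms by simp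
  then show ?thesis
    unfolding u'_def using assms m_pos[OF assms] z1_ge_1[of r] picard_deriv_nonneg[OF admissible_z1, of r]
    by simp
qed

lemma w_at_top_bound: "\<forall>\<^sub>F r in at_top. \<bar>w r - (1 - 1 / (2 * r\<^sup>2))\<bar> \<le> 1 / (4 * r\<^sup>2)"
proof -
  have "(\<lambda>r::real. 1 / r ^ 4) \<in> o[at_top](\<lambda>r. 1 / r\<^sup>2)" by real_asymp
  with w_at_top have "(\<lambda>r. w r - (1 - 1 / (2 * r\<^sup>2))) \<in> o[at_top](\<lambda>r. 1 / r\<^sup>2)"
    by (rule landau_o.big_small_trans)
  from landau_o.smallD[OF this, of "1 / 4"] show ?thesis by simp
qed

lemma potential_bounds: "\<forall>\<^sub>F r in at_top. 2 - 4 / r\<^sup>2 \<le> potential r \<and> potential r \<le> 2"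
  using w_at_top_bound eventually_gt_at_top[of 0]
proof eventually_elim
  case (elim r)
  define e where "e = 1 / r\<^sup>2"
  have w: "- 3 * e / 4 \<le> w r - 1" "w r - 1 \<le> - e / 4"
    using elim(1) unfolding e_def by (auto simp: abs_le_iff field_simps)
  have "w r * w r \<le> w r * 1" using w_nonneg[of r] w_le_1[of r] elim(2) by (intro mult_left_mono) auto
  moreover have "0 \<le> (w r - 1) * (w r - 1)" by simp
  moreover have "potential r = 3 * (w r * w r) - 1 + 3 / 4 * e" "4 / r\<^sup>2 = 4 * e"
    unfolding potential_def e_def by (simp_all add: power2_eq_square)
  ultimately show ?case using w by (simp add: algebra_simps)
qed

lemma w_ge_quarter: "\<forall>\<^sub>F r in at_top. 1 / 4 \<le> w r"
  using w_at_top_bound eventually_ge_at_top[of 1]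
proof eventually_elim
  case (elim r)
  then have "1 / (4 * r\<^sup>2) \<le> 1 / 4" "1 / (2 * r\<^sup>2) \<le> 1 / 2"
    by (simp_all add: field_simps one_le_power)
  then show ?case using elim(1) by (simp add: abs_le_iff)
qed

lemma u_bigtheta: "u \<in> \<Theta>[at_top](\<lambda>r. exp (sqrt 2 * r))"
proof -
  obtain R0 where R0: "\<And>r. r \<ge> R0 \<Longrightarrow> 2 - 4 / r\<^sup>2 \<le> potential r \<and> potential r \<le> 2"
    using potential_bounds unfolding eventually_at_top_linorder by blast
  show ?thesis
    by (rule growth_bigtheta_exp[where a = "sqrt 2" and k = 4 and R = "max R0 1" and u = u and u' = u'
          and Q = potential]) (use R0 u_deriv u'_deriv u_pos u'_nonneg in auto)
qed

text \<open>The second solution is \<open>z1 r \<integral>\<^sub>r\<^sup>\<infinity> 1 / (p z1\<^sup>2)\<close> (reduction of order), and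
  \<open>p z1\<^sup>2 = u\<^sup>2\<close>.\<close>
definition density :: "real \<Rightarrow> real" where "density r = 1 / (u r)\<^sup>2"
definition tail :: "real \<Rightarrow> real" where "tail r = integral {r..} density"

lemma density_pos: "r > 0 \<Longrightarrow> density r > 0"
  unfolding density_def using u_pos[of r] by simp

lemma isCont_density: assumes "r > 0" shows "isCont density r"
  unfolding density_def[abs_def] using DERIV_isCont[OF u_deriv[OF assms]] u_pos[OF assms]
  by (intro continuous_intros) auto

lemma continuous_on_density: "a > 0 \<Longrightarrow> continuous_on {a..} density"
  by (intro continuous_at_imp_continuous_on ballI isCont_density) auto

lemma density_bigo: "density \<in> O[at_top](\<lambda>r. exp (- (2 * sqrt 2) * r))"
proof -
  obtain c where c: "c > 0" "\<forall>\<^sub>F r in at_top. norm (exp (sqrt 2 * r)) \<le> c * norm (u r)"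
    using bigthetaD2[OF u_bigtheta] unfolding bigomega_iff_bigo by (elim landau_o.bigE)
  have "\<forall>\<^sub>F r in at_top. norm (density r) \<le> c\<^sup>2 * norm (exp (- (2 * sqrt 2) * r))"
    using c(2) eventually_gt_at_top[of 0]
  proof eventually_elim
    case (elim r)
    then have "(exp (sqrt 2 * r))\<^sup>2 \<le> (c * u r)\<^sup>2" using u_pos[of r] by (intro power_mono) auto
    then have "c\<^sup>2 / (c * u r)\<^sup>2 \<le> c\<^sup>2 / (exp (sqrt 2 * r))\<^sup>2"
      using u_pos[of r] elim c(1) by (intro divide_left_mono) auto
    moreover have "c\<^sup>2 / (c * u r)\<^sup>2 = 1 / (u r)\<^sup>2"
      using c(1) by (simp add: power_mult_distrib)
    moreover have "(exp (sqrt 2 * r))\<^sup>2 = exp (2 * sqrt 2 * r)"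
      by (simp add: power2_eq_square flip: exp_add)
    ultimately have "1 / (u r)\<^sup>2 \<le> c\<^sup>2 * exp (- (2 * sqrt 2) * r)"
      by (simp add: exp_minus divide_inverse)
    then show ?case unfolding density_def by simp
  qed
  then show ?thesis using c(1) by (intro landau_o.bigI[of "c\<^sup>2"]) auto
qed

lemma
  assumes "a > 0"
  shows density_integrable: "density integrable_on {a..}"
    and tail_bigo: "tail \<in> O[at_top](\<lambda>r. exp (- (2 * sqrt 2) * r))"
  using tail_integral_bigo_exp[OF continuous_on_density[OF assms] density_bigo]
  unfolding tail_def[abs_def] by simp_all

lemma tail_split: assumes "0 < x" "x \<le> b" shows "tail x = integral {x..b} density + tail b"
proof -
  have "(density has_integral integral {x..b} density) {x..b}"
    using assms by (intro integrable_integral integrable_continuous_real continuous_on_subset[OF continuous_on_density]) auto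
  moreover have "(density has_integral tail b) {b..}"
    unfolding tail_def using assms by (intro integrable_integral density_integrable) auto
  ultimately have "(density has_integral (integral {x..b} density + tail b)) ({x..b} \<union> {b..})"
    by (rule has_integral_Un) (auto intro: negligible_subset[OF negligible_sing[of b]])
  moreover have "{x..b} \<union> {b..} = {x..}" using assms by auto
  ultimately show ?thesis unfolding tail_def by (simp add: integral_unique)
qed

lemma tail_deriv: assumes "r > 0" shows "(tail has_real_derivative - density r) (at r)"
proof -
  have "continuous_on {r/2..r+1} density"
    using assms by (intro continuous_on_subset[OF continuous_on_density[of "r/2"]]) auto
  then have "((\<lambda>x. integral {x..r+1} density) has_real_derivative - density r) (at r within {r/2..r+1})"
    using assms by (intro integral_has_real_derivative') auto
  then have "((\<lambda>x. integral {x..r+1} density) has_real_derivative - density r) (at r)"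
    using assms by (simp add: at_within_Icc_at)
  then have "((\<lambda>x. integral {x..r+1} density + tail (r+1)) has_real_derivative - density r) (at r)"
    by (auto intro!: derivative_eq_intros)
  then show ?thesis
  proof (rule has_field_derivative_transform_within_open[where S = "{r/2<..<r+1}"])
    show "integral {x..r+1} density + tail (r+1) = tail x" if "x \<in> {r/2<..<r+1}" for x
      using assms that tail_split[of x "r+1"] by simp
  qed (use assms in auto)
qed

lemma tail_nonneg: "r > 0 \<Longrightarrow> tail r \<ge> 0"
  unfolding tail_def using density_integrable density_pos
  by (intro integral_nonneg) (auto intro: less_imp_le)

lemma tail_pos: assumes "r > 0" shows "tail r > 0"
proof -
  have "\<exists>y. DERIV tail x :> y \<and> y < 0" if "r \<le> x" for x
  proof -
    from that assms have "x > 0" by simp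
    then show ?thesis using tail_deriv[OF \<open>x > 0\<close>] density_pos[OF \<open>x > 0\<close>] by auto
  qed
  then have "tail (r + 1) < tail r"
    using DERIV_neg_imp_decreasing[of r "r + 1" tail] by simp
  then show ?thesis using tail_nonneg[of "r + 1"] assms by simp
qed

definition z2 :: "real \<Rightarrow> real" where "z2 r = z1 r * tail r"
definition z2' :: "real \<Rightarrow> real" where "z2' r = picard_deriv z1 r * tail r - 1 / ((m r)\<^sup>2 * z1 r)"
definition z2'' :: "real \<Rightarrow> real" where "z2'' r = z1'' r * tail r + 2 * m' r / ((m r)^3 * z1 r)"

lemma is_lin_sol_z2: "is_lin_sol w w' z2 z2' z2''"
  unfolding is_lin_sol_def
proof (intro allI impI)
  fix r :: real assume r: "r > 0"
  have tail_deriv': "(tail has_real_derivative - 1 / (m r * z1 r)\<^sup>2) (at r)"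
    using tail_deriv[OF r] unfolding density_def u_def by simp
  have "m r \<noteq> 0" "z1 r \<noteq> 0" using m_pos[OF r] z1_ge_1[of r] r by auto
  show "(z2 has_real_derivative z2' r) (at r) \<and> (z2' has_real_derivative z2'' r) (at r) \<and>
      z2'' r + (2 * w' r / w r + 1 / r) * z2' r - 2 * (w r)\<^sup>2 * z2 r = 0"
    unfolding z2_def[abs_def] z2'_def[abs_def] z2''_def
    using reduction_of_order[where y = z1 and y' = "picard_deriv z1" and y'' = z1'' and m = m
        and m' = m' and I = tail and x = r,
        OF z1_deriv[OF r] picard_deriv_z1_deriv[OF r] m_deriv[OF r] tail_deriv' z1_ode[OF r]
        m'_eq[OF r] \<open>m r \<noteq> 0\<close> \<open>z1 r \<noteq> 0\<close>]
    by blast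
qed

lemma w_lower_near_0: obtains c where "c > 0" "\<forall>\<^sub>F r in at_right 0. c * r \<le> w r"
proof -
  obtain \<alpha> where \<alpha>: "\<alpha> > 0" "(\<lambda>r. w r - \<alpha> * r) \<in> O[at_right 0](\<lambda>r. r ^ 3)"
    using w_near_0 by blast
  have "(\<lambda>r::real. r ^ 3) \<in> o[at_right 0](\<lambda>r. r)" by real_asymp
  with \<alpha>(2) have "(\<lambda>r. w r - \<alpha> * r) \<in> o[at_right 0](\<lambda>r. r)" by (rule landau_o.big_small_trans)
  then have "\<forall>\<^sub>F r in at_right 0. norm (w r - \<alpha> * r) \<le> \<alpha> / 2 * norm r"
    using \<alpha>(1) by (intro landau_o.smallD) auto
  then have "\<forall>\<^sub>F r in at_right 0. \<alpha> / 2 * r \<le> w r"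
    using eventually_at_right_less[of 0]
  proof eventually_elim
    case (elim r)
    then have "\<bar>w r - \<alpha> * r\<bar> \<le> \<alpha> / 2 * r" by simp
    then have "- (w r - \<alpha> * r) \<le> \<alpha> / 2 * r" by (rule abs_le_D2)
    moreover have "\<alpha> * r = \<alpha> / 2 * r + \<alpha> / 2 * r" by simp
    ultimately show ?case by linarith
  qed
  with \<alpha>(1) show ?thesis by (intro that[of "\<alpha> / 2"]) auto
qed

lemma density_near_0: obtains K where "K > 0" "\<forall>\<^sub>F r in at_right 0. density r \<le> K / r ^ 3"
proof -
  obtain c where c: "c > 0" "\<forall>\<^sub>F r in at_right 0. c * r \<le> w r" by (rule w_lower_near_0)
  have "\<forall>\<^sub>F r in at_right 0. density r \<le> (1 / c\<^sup>2) / r ^ 3"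
    using c(2) eventually_at_right_less[of 0]
  proof eventually_elim
    case (elim r)
    have "(c * r)\<^sup>2 \<le> (w r)\<^sup>2" using elim c(1) by (intro power_mono) auto
    moreover have "(w r)\<^sup>2 \<le> (w r)\<^sup>2 * (z1 r)\<^sup>2"
      using z1_ge_1[of r] elim by (simp add: mult_le_cancel_left1 one_le_power)
    ultimately have "r * (c * r)\<^sup>2 \<le> r * ((w r)\<^sup>2 * (z1 r)\<^sup>2)"
      using elim by (intro mult_left_mono) auto
    moreover have "(u r)\<^sup>2 = r * ((w r)\<^sup>2 * (z1 r)\<^sup>2)"
      unfolding u_def m_def using elim by (simp add: power_mult_distrib)
    ultimately have "c\<^sup>2 * r ^ 3 \<le> (u r)\<^sup>2"
      by (simp add: power_mult_distrib power3_eq_cube power2_eq_square algebra_simps)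
    then show ?case
      unfolding density_def using c(1) elim u_pos[of r] by (simp add: field_simps)
  qed
  with c(1) show ?thesis by (intro that[of "1 / c\<^sup>2"]) auto
qed

lemma tail_bigo_at_0: "tail \<in> O[at_right 0](\<lambda>r. 1 / r\<^sup>2)"
proof -
  obtain K where K: "K > 0" "\<forall>\<^sub>F r in at_right 0. density r \<le> K / r ^ 3" by (rule density_near_0)
  then obtain b where b: "b > 0" "\<And>r. 0 < r \<Longrightarrow> r < b \<Longrightarrow> density r \<le> K / r ^ 3"
    unfolding eventually_at_right_field by auto
  define d where "d = b / 2"
  have d: "d > 0" "d < b" using b unfolding d_def by auto
  have tail_le: "tail r \<le> K / (2 * r\<^sup>2) + tail d" if r: "0 < r" "r \<le> d" for r
  proof -
    have "((\<lambda>t. K / t ^ 3) has_integral (- K / (2 * d\<^sup>2)) - (- K / (2 * r\<^sup>2))) {r..d}"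
    proof (rule fundamental_theorem_of_calculus)
      fix x assume "x \<in> {r..d}"
      then have "x > 0" using r by auto
      then show "((\<lambda>t. - K / (2 * t\<^sup>2)) has_vector_derivative K / x ^ 3) (at x within {r..d})"
        by (auto intro!: derivative_eq_intros simp: has_real_derivative_iff_has_vector_derivative[symmetric]
            field_simps power2_eq_square power3_eq_cube)
    qed (use r in simp)
    then have "integral {r..d} density \<le> (- K / (2 * d\<^sup>2)) - (- K / (2 * r\<^sup>2))"
      using r d b(2)
      by (intro has_integral_le[OF integrable_integral] integrable_continuous_real
          continuous_on_subset[OF continuous_on_density[of r]]) auto
    also have "\<dots> \<le> K / (2 * r\<^sup>2)" using K(1) by simp
    finally show ?thesis using tail_split[OF r] by simp
  qed
  have "\<forall>\<^sub>F r in at_right 0. 0 < r \<and> r < d"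
    using d(1) unfolding eventually_at_right_field by auto
  then have "\<forall>\<^sub>F r in at_right 0. norm (tail r) \<le> norm (K / (2 * r\<^sup>2) + tail d)"
  proof eventually_elim
    case (elim r)
    then show ?case using tail_le[of r] tail_nonneg[of r] by simp
  qed
  then have "tail \<in> O[at_right 0](\<lambda>r. K / (2 * r\<^sup>2) + tail d)" by (rule landau_o.big_mono)
  also have "(\<lambda>r. K / (2 * r\<^sup>2) + D) \<in> O[at_right 0](\<lambda>r. 1 / r\<^sup>2)" for D by real_asymp
  finally show ?thesis .
qed

lemma z1_bigo_at_0: "z1 \<in> O[at_right 0](\<lambda>_. 1)"
proof (rule landau_o.bigI[of "majorant 1"])
  show "\<forall>\<^sub>F r in at_right 0. norm (z1 r) \<le> majorant 1 * norm (1::real)"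
  proof (rule eventually_at_rightI[of 0 1])
    fix r :: real assume "r \<in> {0<..<1}"
    then show "norm (z1 r) \<le> majorant 1 * norm (1::real)"
      using z1_le_majorant[of r] z1_ge_1[of r] majorant_mono[of r 1] by auto
  qed simp
qed (use majorant_ge_1[of 1] in simp)

lemma z1_bigo_at_top: "z1 \<in> O[at_top](\<lambda>r. r powr (-1/2) * exp (sqrt 2 * r))"
proof -
  have bound: "\<forall>\<^sub>F r in at_top. norm (1 / m r) \<le> 4 * norm (r powr (-1/2))"
    using w_ge_quarter eventually_gt_at_top[of 0]
  proof eventually_elim
    case (elim r)
    then have "sqrt r * (1 / 4) \<le> sqrt r * w r" by (intro mult_left_mono) auto
    then have "1 / m r \<le> 1 / (sqrt r / 4)"
      unfolding m_def using elim m_pos[of r] by (intro divide_left_mono) (auto simp: m_def)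
    also have "\<dots> = 4 * r powr (-1/2)"
      using elim by (simp add: powr_minus_divide powr_half_sqrt)
    finally show ?case using m_pos[of r] elim by simp
  qed
  have "(\<lambda>r. 1 / m r) \<in> O[at_top](\<lambda>r. r powr (-1/2))" by (rule landau_o.bigI[OF _ bound]) simp
  then have "(\<lambda>r. 1 / m r * u r) \<in> O[at_top](\<lambda>r. r powr (-1/2) * exp (sqrt 2 * r))"
    using bigthetaD1[OF u_bigtheta] by (rule landau_o.big.mult)
  moreover have "\<forall>\<^sub>F r in at_top. 1 / m r * u r = z1 r"
    using eventually_gt_at_top[of 0]
  proof eventually_elim
    case (elim r)
    then have "m r \<noteq> 0" using m_pos[of r] by simp
    then show ?case by (simp add: u_def)
  qed
  ultimately show ?thesis by (simp add: landau_o.big.in_cong)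
qed

lemma z2_bigo_at_0: "z2 \<in> O[at_right 0](\<lambda>r. 1 / r\<^sup>2)"
  using landau_o.big.mult[OF z1_bigo_at_0 tail_bigo_at_0] unfolding z2_def[abs_def] by simp

lemma z2_bigo_at_top: "z2 \<in> O[at_top](\<lambda>r. r powr (-1/2) * exp (- sqrt 2 * r))"
proof -
  have "z2 \<in> O[at_top](\<lambda>r. r powr (-1/2) * exp (sqrt 2 * r) * exp (- (2 * sqrt 2) * r))"
    using landau_o.big.mult[OF z1_bigo_at_top tail_bigo[of 1]] unfolding z2_def[abs_def] by simp
  also have "(\<lambda>r::real. r powr (-1/2) * exp (sqrt 2 * r) * exp (- (2 * sqrt 2) * r))
      \<in> O[at_top](\<lambda>r. r powr (-1/2) * exp (- sqrt 2 * r))"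
    by real_asymp
  finally show ?thesis .
qed

lemma lin_indep_z1_z2: "lin_indep_pos z1 z2"
  unfolding lin_indep_pos_def
proof (intro allI impI conjI)
  fix a b assume comb: "\<forall>r>0. a * z1 r + b * z2 r = 0"
  have "(\<lambda>r::real. r powr (-1/2) * exp (- sqrt 2 * r)) \<in> o[at_top](\<lambda>_. 1)" by real_asymp
  with z2_bigo_at_top have "z2 \<in> o[at_top](\<lambda>_. 1)" by (rule landau_o.big_small_trans)
  from smalloD_tendsto[OF this] have "(z2 \<longlongrightarrow> 0) at_top" by simp
  then have lim: "((\<lambda>r. \<bar>b\<bar> * \<bar>z2 r\<bar>) \<longlongrightarrow> 0) at_top"
    by (intro tendsto_mult_right_zero tendsto_rabs_zero)
  have bound: "\<forall>\<^sub>F r in at_top. \<bar>a\<bar> \<le> \<bar>b\<bar> * \<bar>z2 r\<bar>"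
    using eventually_gt_at_top[of 0]
  proof eventually_elim
    case (elim r)
    have "\<bar>a\<bar> \<le> \<bar>a\<bar> * z1 r" using z1_ge_1[of r] elim by (simp add: mult_le_cancel_left1)
    also have "\<dots> = \<bar>a * z1 r\<bar>" using z1_ge_1[of r] elim by (simp add: abs_mult)
    also have "\<dots> = \<bar>b\<bar> * \<bar>z2 r\<bar>"
    proof -
      have "a * z1 r = - (b * z2 r)" using comb elim by (simp add: eq_neg_iff_add_eq_0)
      then show ?thesis by (simp add: abs_mult)
    qed
    finally show ?case .
  qed
  have "\<bar>a\<bar> \<le> 0" using tendsto_le[OF trivial_limit_at_top_linorder lim tendsto_const bound] .
  then show "a = 0" by simp
  have "z2 1 > 0" unfolding z2_def using z1_ge_1[of 1] tail_pos[of 1] by simp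
  moreover have "b * z2 1 = 0" using comb[rule_format, of 1] \<open>a = 0\<close> by simp
  ultimately show "b = 0" by simp
qed

lemma solutions_with_asymptotics:
  "\<exists>z1 z1' z1'' z2 z2' z2''.
     is_lin_sol w w' z1 z1' z1'' \<and> is_lin_sol w w' z2 z2' z2'' \<and> lin_indep_pos z1 z2 \<and>
     z1 \<in> O[at_right 0](\<lambda>_. 1) \<and> z1 \<in> O[at_top](\<lambda>r. r powr (-1/2) * exp (sqrt 2 * r)) \<and>
     z2 \<in> O[at_right 0](\<lambda>r. 1 / r\<^sup>2) \<and> z2 \<in> O[at_top](\<lambda>r. r powr (-1/2) * exp (- sqrt 2 * r))"
  by (intro exI[of _ z1] exI[of _ "picard_deriv z1"] exI[of _ z1''] exI[of _ z2] exI[of _ z2']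
      exI[of _ z2''] conjI is_lin_sol_z1 is_lin_sol_z2 lin_indep_z1_z2
      z1_bigo_at_0 z1_bigo_at_top z2_bigo_at_0 z2_bigo_at_top)

end

theorem lemma2p2:
  fixes w w' w'' :: "real \<Rightarrow> real"
  assumes prof: "is_profile w w' w''"
    and w_bounds: "\<forall>r>0. 0 < w r \<and> w r < 1 \<and> w' r > 0"
    and w_zero: "\<exists>\<alpha>>0. (\<lambda>r. w r - \<alpha> * r) \<in> O[at_right 0](\<lambda>r. r ^ 3)"
    and w_inf: "(\<lambda>r. w r - (1 - 1 / (2 * r\<^sup>2))) \<in> O[at_top](\<lambda>r. 1 / r ^ 4)"
    and w'_inf: "(\<lambda>r. w' r - 1 / r ^ 3) \<in> O[at_top](\<lambda>r. 1 / r ^ 5)"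
  shows "\<exists>z1 z1' z1'' z2 z2' z2''.
           is_lin_sol w w' z1 z1' z1'' \<and> is_lin_sol w w' z2 z2' z2'' \<and>
           lin_indep_pos z1 z2 \<and>
           z1 \<in> O[at_right 0](\<lambda>_. 1) \<and>
           z1 \<in> O[at_top](\<lambda>r. r powr (-1/2) * exp (sqrt 2 * r)) \<and>
           z2 \<in> O[at_right 0](\<lambda>r. 1 / r\<^sup>2) \<and>
           z2 \<in> O[at_top](\<lambda>r. r powr (-1/2) * exp (- sqrt 2 * r))"
proof -
  interpret vortex_profile w w' w''
  proof unfold_locales
    show "(w has_real_derivative w' r) (at r)" "(w' has_real_derivative w'' r) (at r)"
      and "w'' r + w' r / r - w r / r\<^sup>2 + (1 - (w r)\<^sup>2) * w r = 0" if "r > 0" for r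
      using prof that unfolding is_profile_def by blast+
    show "w 0 = 0" using prof unfolding is_profile_def by blast
  qed (use w_bounds w_zero w_inf in auto)
  show ?thesis by (rule solutions_with_asymptotics)
qed

end
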